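(* Let $X$ be a real Banach space and let $A \subset X$ be a compact set not containing the zero vector. Let $\{ f_i : 1 \le i \le m\} \subset S_{X^*}$ be a collection of weak*-exposed points of $B_{X^*}$ such that $\max\{ f_i(y) : 1 \le i \le m\} > 0$ for each $y \in A$. Then $A$ has a ball-covering consisting of $m$ balls.
   Context: $B_{X^*}$, $S_{X^*}$ are the closed unit ball and unit sphere of the dual $X^*$. Let $\Psi : X \to X^{**}$ be the canonical embedding. A point $f_0 \in B_{X^*}$ is a weak*-exposed point of $B_{X^*}$ if there is $x \in X$ with $f_0(x) = \sup\{ f(x) : f \in B_{X^*}\}$ and $\{ f \in B_{X^*} : f(x) = f_0(x)\} = \{f_0\}$ (i.e. $\Psi(x)$ exposes $f_0$). A ball-covering of a set $A \subset X$ is a collection of open balls $B(c, r) = \{ z : \|c - z\| < r\}$, none of which contains the zero vector (i.e. $0 < r \le \|c\|$), whose union contains $A$. *)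

theory Defs
  imports "HOL-Analysis.Analysis"
begin

definition dual_ball :: "('a::real_normed_vector \<Rightarrow>\<^sub>L real) set" where
  "dual_ball = {f. norm f \<le> 1}"

definition dual_sphere :: "('a::real_normed_vector \<Rightarrow>\<^sub>L real) set" where
  "dual_sphere = {f. norm f = 1}"

definition weak_star_exposed :: "('a::real_normed_vector \<Rightarrow>\<^sub>L real) \<Rightarrow> bool" where
  "weak_star_exposed f0 \<longleftrightarrow> f0 \<in> dual_ball \<and>
     (\<exists>x::'a. blinfun_apply f0 x = (SUP f\<in>dual_ball. blinfun_apply f x) \<and>
            {f \<in> dual_ball. blinfun_apply f x = blinfun_apply f0 x} = {f0})"

definition ball_covering :: "'a::real_normed_vector set \<Rightarrow> ('a \<times> real) set \<Rightarrow> bool" where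
  "ball_covering A Bs \<longleftrightarrow> (\<forall>(c, r) \<in> Bs. 0 < r \<and> r \<le> norm c) \<and>
     A \<subseteq> (\<Union>(c, r) \<in> Bs. ball c r)"

end

theory Submission
  imports Defs
begin

(* Choose x_i with Psi(x_i) exposing f_i. If f_i(y) > 0, then y lies in a ball
   B(t x_i, t ||x_i||) with t >= 0: otherwise Hahn-Banach gives g in B_X* with g(x_i) = ||x_i||
   and g(y) <= 0, so g also attains its norm at x_i and exposedness forces g = f_i, contradicting
   f_i(y) > 0. These balls increase with t, so by compactness a single t = N serves all of A, and
   the m balls B(N x_i, N ||x_i||) avoid 0 because 0 lies on their boundary.
   Hahn-Banach is used in its sublinear form: by Zorn's lemma there is a minimal sublinear
   functional below a given one, and minimality forces it to be linear. *)

definition sublinear :: "('a::real_vector \<Rightarrow> real) \<Rightarrow> bool" where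
  "sublinear q \<longleftrightarrow> (\<forall>a v. 0 \<le> a \<longrightarrow> q (a *\<^sub>R v) = a * q v) \<and> (\<forall>u v. q (u + v) \<le> q u + q v)"

lemma sublinear_scaleR: "sublinear q \<Longrightarrow> 0 \<le> a \<Longrightarrow> q (a *\<^sub>R v) = a * q v"
  unfolding sublinear_def by blast

lemma sublinear_add: "sublinear q \<Longrightarrow> q (u + v) \<le> q u + q v"
  unfolding sublinear_def by blast

lemma sublinear_zero: "sublinear q \<Longrightarrow> q 0 = 0"
  using sublinear_scaleR[of q 0 0] by simp

lemma sublinear_neg_le: "sublinear q \<Longrightarrow> - q (- v) \<le> q v"
  using sublinear_add[of q v "-v"] sublinear_zero[of q] by simp

lemma sublinear_norm: "sublinear norm"
  unfolding sublinear_def by (auto simp: norm_triangle_ineq)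

lemma sublinearI:
  fixes q :: "'a::real_vector \<Rightarrow> real"
  assumes scaleR: "\<And>a v. 0 < a \<Longrightarrow> q (a *\<^sub>R v) \<le> a * q v" and zero: "q 0 \<le> 0"
    and add: "\<And>u v. q (u + v) \<le> q u + q v"
  shows "sublinear q"
  unfolding sublinear_def
proof (intro conjI allI impI add)
  fix a :: real and v :: 'a
  assume "0 \<le> a"
  show "q (a *\<^sub>R v) = a * q v"
  proof (cases "a = 0")
    case True
    then show ?thesis using zero add[of 0 0] by simp
  next
    case False
    with \<open>0 \<le> a\<close> have a: "0 < a" by simp
    have "q v = q (inverse a *\<^sub>R (a *\<^sub>R v))" using a by simp
    also have "\<dots> \<le> inverse a * q (a *\<^sub>R v)"
      using scaleR[of "inverse a" "a *\<^sub>R v"] a by (simp only: positive_imp_inverse_positive)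
    finally have "a * q v \<le> q (a *\<^sub>R v)" using a by (simp add: field_simps)
    with scaleR[OF a, of v] show ?thesis by simp
  qed
qed

text \<open>The one-dimensional step of the Hahn--Banach theorem: q is pushed down along the ray
  through w until its value at -w is at most -c.\<close>
definition ray_inf :: "('a::real_vector \<Rightarrow> real) \<Rightarrow> 'a \<Rightarrow> real \<Rightarrow> 'a \<Rightarrow> real" where
  "ray_inf q w c v = (INF t\<in>{0..}. q (v + t *\<^sub>R w) - t * c)"

lemma ray_inf_greatest:
  "(\<And>t. 0 \<le> t \<Longrightarrow> r \<le> q (v + t *\<^sub>R w) - t * c) \<Longrightarrow> r \<le> ray_inf q w c v"
  unfolding ray_inf_def by (rule cINF_greatest) auto

lemma ray_inf_le:
  assumes q: "sublinear q" and c: "c \<le> q w" and t: "0 \<le> t"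
  shows "ray_inf q w c v \<le> q (v + t *\<^sub>R w) - t * c"
  unfolding ray_inf_def
proof (rule cINF_lower)
  have "- q (- v) \<le> q (v + s *\<^sub>R w) - s * c" if s: "0 \<le> s" for s
  proof -
    have "s * c \<le> s * q w" using c s by (simp add: mult_left_mono)
    also have "\<dots> = q (s *\<^sub>R w)" using sublinear_scaleR[OF q s] by simp
    also have "\<dots> \<le> q (v + s *\<^sub>R w) + q (- v)"
      using sublinear_add[OF q, of "v + s *\<^sub>R w" "- v"] by simp
    finally show ?thesis by linarith
  qed
  then show "bdd_below ((\<lambda>s. q (v + s *\<^sub>R w) - s * c) ` {0..})"
    by (intro bdd_belowI2) simp
qed (use t in simp)

lemma ray_inf_le_self: "sublinear q \<Longrightarrow> c \<le> q w \<Longrightarrow> ray_inf q w c v \<le> q v"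
  using ray_inf_le[of q c w 0 v] by simp

lemma ray_inf_neg: "sublinear q \<Longrightarrow> c \<le> q w \<Longrightarrow> ray_inf q w c (- w) \<le> - c"
  using ray_inf_le[of q c w 1 "- w"] sublinear_zero[of q] by simp

lemma sublinear_ray_inf:
  assumes q: "sublinear q" and c: "c \<le> q w"
  shows "sublinear (ray_inf q w c)"
proof -
  note le = ray_inf_le[OF q c] and ge = ray_inf_greatest[of _ q _ w c]
  show ?thesis
  proof (rule sublinearI)
    show "ray_inf q w c 0 \<le> 0" using ray_inf_le_self[OF q c] sublinear_zero[OF q] by metis
  next
    fix a :: real and v
    assume a: "0 < a"
    have "ray_inf q w c (a *\<^sub>R v) / a \<le> ray_inf q w c v"
    proof (rule ge)
      fix t :: real assume t: "0 \<le> t"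
      have "ray_inf q w c (a *\<^sub>R v) \<le> q (a *\<^sub>R v + (a * t) *\<^sub>R w) - (a * t) * c"
        using le a t by simp
      also have "\<dots> = a * (q (v + t *\<^sub>R w) - t * c)"
        using sublinear_scaleR[OF q, of a "v + t *\<^sub>R w"] a by (simp add: algebra_simps)
      finally show "ray_inf q w c (a *\<^sub>R v) / a \<le> q (v + t *\<^sub>R w) - t * c"
        using a by (simp add: field_simps)
    qed
    then show "ray_inf q w c (a *\<^sub>R v) \<le> a * ray_inf q w c v" using a by (simp add: field_simps)
  next
    fix u v
    have "ray_inf q w c (u + v) - (q (u + s *\<^sub>R w) - s * c) \<le> ray_inf q w c v"
      if s: "0 \<le> s" for s
    proof (rule ge)
      fix t :: real assume t: "0 \<le> t"
      have "ray_inf q w c (u + v) \<le> q ((u + s *\<^sub>R w) + (v + t *\<^sub>R w)) - (s + t) * c"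
        using le[of "s + t" "u + v"] s t by (simp add: algebra_simps)
      then show "ray_inf q w c (u + v) - (q (u + s *\<^sub>R w) - s * c) \<le> q (v + t *\<^sub>R w) - t * c"
        using sublinear_add[OF q, of "u + s *\<^sub>R w" "v + t *\<^sub>R w"] by (simp add: algebra_simps)
    qed
    then have "ray_inf q w c (u + v) - ray_inf q w c v \<le> ray_inf q w c u"
      by (intro ge) (simp add: algebra_simps)
    then show "ray_inf q w c (u + v) \<le> ray_inf q w c u + ray_inf q w c v" by simp
  qed
qed

lemma sublinear_INF_chain:
  fixes p :: "'a::real_vector \<Rightarrow> real"
  assumes "C \<noteq> {}" and C: "\<And>q. q \<in> C \<Longrightarrow> sublinear q \<and> q \<le> p"
    and chain: "\<And>q q'. q \<in> C \<Longrightarrow> q' \<in> C \<Longrightarrow> q \<le> q' \<or> q' \<le> q"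
  shows "sublinear (\<lambda>v. INF q\<in>C. q v)" and "r \<in> C \<Longrightarrow> (\<lambda>v. INF q\<in>C. q v) \<le> r"
proof -
  define u where "u = (\<lambda>v. INF q\<in>C. q v)"
  have bdd: "bdd_below ((\<lambda>q. q v) ` C)" for v
  proof (intro bdd_belowI2)
    fix q assume "q \<in> C"
    then have "- p (- v) \<le> - q (- v)" "- q (- v) \<le> q v"
      using C sublinear_neg_le by (auto simp: le_fun_def)
    then show "- p (- v) \<le> q v" by linarith
  qed
  have le: "u v \<le> q v" if "q \<in> C" for q v
    unfolding u_def using bdd that by (rule cINF_lower)
  have ge: "r \<le> u v" if "\<And>q. q \<in> C \<Longrightarrow> r \<le> q v" for r v
    unfolding u_def using \<open>C \<noteq> {}\<close> that by (rule cINF_greatest)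
  have "sublinear u"
  proof (rule sublinearI)
    obtain q where q: "q \<in> C" using \<open>C \<noteq> {}\<close> by blast
    then have "q 0 = 0" using C sublinear_zero by blast
    then show "u 0 \<le> 0" using le[OF q, of 0] by simp
  next
    fix a :: real and v
    assume a: "0 < a"
    have "u (a *\<^sub>R v) / a \<le> u v"
    proof (rule ge)
      fix q assume q: "q \<in> C"
      have "u (a *\<^sub>R v) \<le> a * q v"
        using le[OF q, of "a *\<^sub>R v"] sublinear_scaleR[of q a v] C[OF q] a by simp
      then show "u (a *\<^sub>R v) / a \<le> q v" using a by (simp add: field_simps)
    qed
    then show "u (a *\<^sub>R v) \<le> a * u v" using a by (simp add: field_simps)
  next
    fix x y
    have "u (x + y) - q x \<le> u y" if q: "q \<in> C" for q
    proof (rule ge)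
      fix q' assume q': "q' \<in> C"
      have sub: "sublinear q" "sublinear q'" using C q q' by blast+
      txt \<open>Use subadditivity of the smaller of q and q'.\<close>
      consider "q \<le> q'" | "q' \<le> q" using chain[OF q q'] by blast
      then show "u (x + y) - q x \<le> q' y"
      proof cases
        case 1
        then have "q y \<le> q' y" by (rule le_funD)
        then show ?thesis using le[OF q, of "x + y"] sublinear_add[OF sub(1), of x y] by linarith
      next
        case 2
        then have "q' x \<le> q x" by (rule le_funD)
        then show ?thesis using le[OF q', of "x + y"] sublinear_add[OF sub(2), of x y] by linarith
      qed
    qed
    then have "u (x + y) - u y \<le> u x" by (intro ge) (simp add: algebra_simps)
    then show "u (x + y) \<le> u x + u y" by simp
  qed
  then show "sublinear (\<lambda>v. INF q\<in>C. q v)" by (simp only: u_def)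
  show "(\<lambda>v. INF q\<in>C. q v) \<le> r" if "r \<in> C" using le[OF that] by (simp add: u_def le_fun_def)
qed

lemma minimal_sublinear_imp_linear:
  fixes p :: "'a::real_vector \<Rightarrow> real"
  assumes p: "sublinear p" and minimal: "\<And>q. sublinear q \<Longrightarrow> q \<le> p \<Longrightarrow> q = p"
  shows "linear p"
proof -
  have neg: "p (- v) = - p v" for v
  proof -
    have "ray_inf p v (p v) = p"
      by (rule minimal)
        (use sublinear_ray_inf[OF p] ray_inf_le_self[OF p] in \<open>auto intro: le_funI\<close>)
    then have "p (- v) \<le> - p v" using ray_inf_neg[OF p, of "p v" v] by simp
    then show ?thesis using sublinear_neg_le[OF p, of "- v"] by simp
  qed
  show ?thesis
  proof (rule linearI)
    fix u v
    show "p (u + v) = p u + p v"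
      using sublinear_add[OF p, of u v] sublinear_add[OF p, of "u + v" "- v"] neg[of v] by simp
  next
    fix a :: real and v
    show "p (a *\<^sub>R v) = a *\<^sub>R p v"
    proof (cases "0 \<le> a")
      case True
      then show ?thesis using sublinear_scaleR[OF p] by simp
    next
      case False
      then show ?thesis using sublinear_scaleR[OF p, of "- a" v] neg[of "a *\<^sub>R v"] by simp
    qed
  qed
qed

theorem hahn_banach_sublinear:
  fixes p :: "'a::real_vector \<Rightarrow> real"
  assumes "sublinear p"
  obtains g where "linear g" "g \<le> p"
proof -
  define S where "S = {q. sublinear q \<and> q \<le> p}"
  have "partial_order_on S (relation_of (\<ge>) S)"
    by (rule partial_order_on_relation_ofI) auto
  then have "\<exists>m\<in>S. \<forall>q\<in>S. q \<le> m \<longrightarrow> q = m"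
  proof (rule predicate_Zorn)
    fix C assume "C \<in> Chains (relation_of (\<ge>) S)"
    then have C: "\<And>q. q \<in> C \<Longrightarrow> sublinear q \<and> q \<le> p"
      and chain: "\<And>q q'. q \<in> C \<Longrightarrow> q' \<in> C \<Longrightarrow> q \<le> q' \<or> q' \<le> q"
      unfolding Chains_def relation_of_def S_def by blast+
    show "\<exists>u\<in>S. \<forall>q\<in>C. u \<le> q"
    proof (cases "C = {}")
      case True
      then show ?thesis using assms S_def by blast
    next
      case False
      then obtain q where "q \<in> C" by blast
      have "sublinear (\<lambda>v. INF q\<in>C. q v)"
        and INF_le: "\<And>r. r \<in> C \<Longrightarrow> (\<lambda>v. INF q\<in>C. q v) \<le> r"
        by (rule sublinear_INF_chain[where p = p]; use C chain False in blast)+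
      moreover have "(\<lambda>v. INF q\<in>C. q v) \<le> p"
        using INF_le[OF \<open>q \<in> C\<close>] C[OF \<open>q \<in> C\<close>] by (blast intro: order_trans)
      ultimately show ?thesis unfolding S_def by blast
    qed
  qed
  then obtain m where "sublinear m" "m \<le> p" and minimal: "\<And>q. q \<in> S \<Longrightarrow> q \<le> m \<Longrightarrow> q = m"
    unfolding S_def by blast
  have "q = m" if "sublinear q" "q \<le> m" for q
    using minimal[of q] that \<open>m \<le> p\<close> order_trans unfolding S_def by blast
  then have "linear m" by (rule minimal_sublinear_imp_linear[OF \<open>sublinear m\<close>])
  then show thesis using \<open>m \<le> p\<close> by (rule that)
qed

definition exposes :: "'a::real_normed_vector \<Rightarrow> ('a \<Rightarrow>\<^sub>L real) \<Rightarrow> bool" where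
  "exposes x f \<longleftrightarrow> blinfun_apply f x = (SUP g\<in>dual_ball. blinfun_apply g x) \<and>
     {g \<in> dual_ball. blinfun_apply g x = blinfun_apply f x} = {f}"

lemma weak_star_exposed_iff: "weak_star_exposed f \<longleftrightarrow> f \<in> dual_ball \<and> (\<exists>x. exposes x f)"
  unfolding weak_star_exposed_def exposes_def by blast

lemma dual_ball_apply_le: "g \<in> dual_ball \<Longrightarrow> blinfun_apply g x \<le> norm x"
  unfolding dual_ball_def using norm_blinfun[of g x] mult_right_mono[of "norm g" 1 "norm x"]
  by auto

lemma dominated_linear_in_dual_ball:
  fixes G :: "'a::real_normed_vector \<Rightarrow> real"
  assumes "linear G" and G_le: "\<And>v. G v \<le> norm v"
  obtains g where "g \<in> dual_ball" "blinfun_apply g = G"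
proof
  have abs_le: "\<bar>G v\<bar> \<le> norm v" for v
    using G_le[of v] G_le[of "- v"] linear_neg[OF \<open>linear G\<close>, of v] by simp
  then have "bounded_linear G"
    using \<open>linear G\<close>
    by (intro bounded_linear_intro[where K = 1]) (auto simp: linear_add linear_scale)
  then show G: "blinfun_apply (Blinfun G) = G" by (rule bounded_linear_Blinfun_apply)
  show "Blinfun G \<in> dual_ball"
    unfolding dual_ball_def using abs_le by (auto simp: G intro: norm_blinfun_bound)
qed

lemma norming_functional_nonpos:
  fixes x y :: "'a::real_normed_vector"
  assumes far: "\<And>t. 0 \<le> t \<Longrightarrow> t * norm x \<le> norm (t *\<^sub>R x - y)"
  obtains g where "g \<in> dual_ball" "blinfun_apply g x = norm x" "blinfun_apply g y \<le> 0"
proof -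
  define q1 where "q1 = ray_inf norm x (norm x)"
  have q1: "sublinear q1" "q1 \<le> norm" "q1 (- x) \<le> - norm x"
    unfolding q1_def using sublinear_ray_inf ray_inf_le_self ray_inf_neg sublinear_norm
    by (blast intro: le_funI order_refl)+
  have "0 \<le> q1 (- y)"
    unfolding q1_def using far by (intro ray_inf_greatest) (simp add: algebra_simps)
  then have q2: "sublinear (ray_inf q1 (- y) 0)" "ray_inf q1 (- y) 0 \<le> q1"
    "ray_inf q1 (- y) 0 y \<le> 0"
    using sublinear_ray_inf[OF q1(1)] ray_inf_le_self[OF q1(1)] ray_inf_neg[OF q1(1), of 0 "- y"]
    by (auto intro: le_funI)
  obtain G where G: "linear G" "G \<le> ray_inf q1 (- y) 0"
    using hahn_banach_sublinear[OF q2(1)] by blast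
  have G_le: "G v \<le> norm v" for v
    using le_funD[OF G(2), of v] le_funD[OF q2(2), of v] le_funD[OF q1(2), of v] by linarith
  obtain g where g: "g \<in> dual_ball" "blinfun_apply g = G"
    using dominated_linear_in_dual_ball[OF G(1) G_le] by blast
  show thesis
  proof (rule that[OF g(1)])
    have "- G x \<le> - norm x"
      using le_funD[OF G(2), of "- x"] le_funD[OF q2(2), of "- x"] q1(3) linear_neg[OF G(1), of x]
      by simp
    then show "blinfun_apply g x = norm x" using G_le[of x] g(2) by simp
    show "blinfun_apply g y \<le> 0" using le_funD[OF G(2), of y] q2(3) g(2) by simp
  qed
qed

lemma exposes_imp_ray_ball:
  fixes x y :: "'a::real_normed_vector"
  assumes "f \<in> dual_ball" "exposes x f" "blinfun_apply f y > 0"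
  obtains t where "0 \<le> t" "y \<in> ball (t *\<^sub>R x) (t * norm x)"
proof -
  have "\<exists>t\<ge>0. y \<in> ball (t *\<^sub>R x) (t * norm x)"
  proof (rule ccontr)
    assume "\<not> ?thesis"
    then have "t * norm x \<le> norm (t *\<^sub>R x - y)" if "0 \<le> t" for t
      using that by (auto simp: dist_norm not_less)
    then obtain g where g: "g \<in> dual_ball" "blinfun_apply g x = norm x" "blinfun_apply g y \<le> 0"
    by (rule norming_functional_nonpos)
    have "blinfun_apply f x \<le> norm x" using assms(1) by (rule dual_ball_apply_le)
    moreover have "blinfun_apply g x \<le> (SUP h\<in>dual_ball. blinfun_apply h x)"
      by (intro cSUP_upper[OF g(1)] bdd_aboveI2[where M = "norm x"] dual_ball_apply_le)
    ultimately have "blinfun_apply g x = blinfun_apply f x"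
      using assms(2) g(2) unfolding exposes_def by linarith
    with g(1) have "g \<in> {h \<in> dual_ball. blinfun_apply h x = blinfun_apply f x}" by blast
    then have "g = f" using assms(2) unfolding exposes_def by blast
    with g(3) assms(3) show False by simp
  qed
  then show thesis using that by blast
qed

lemma ball_scaleR_mono:
  fixes x :: "'a::real_normed_vector"
  assumes "t \<le> s"
  shows "ball (t *\<^sub>R x) (t * norm x) \<subseteq> ball (s *\<^sub>R x) (s * norm x)"
proof
  fix y assume "y \<in> ball (t *\<^sub>R x) (t * norm x)"
  then have "dist (t *\<^sub>R x) y < t * norm x" by simp
  moreover have "dist (s *\<^sub>R x) (t *\<^sub>R x) = (s - t) * norm x"
    using assms by (simp add: dist_norm flip: scaleR_diff_left)
  ultimately show "y \<in> ball (s *\<^sub>R x) (s * norm x)"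
    using dist_triangle[of "s *\<^sub>R x" y "t *\<^sub>R x"] by (simp add: algebra_simps)
qed

lemma exposes_nonzero:
  assumes "f \<in> dual_sphere" "exposes x f"
  shows "x \<noteq> 0"
proof
  assume "x = 0"
  have "(0 :: 'a \<Rightarrow>\<^sub>L real) \<in> {g \<in> dual_ball. blinfun_apply g x = blinfun_apply f x}"
    using \<open>x = 0\<close> by (simp add: dual_ball_def blinfun.zero_right)
  then have "f = 0" using assms(2) unfolding exposes_def by (metis singletonD)
  with assms(1) show False by (simp add: dual_sphere_def)
qed

lemma compact_subset_incseq_open:
  fixes U :: "nat \<Rightarrow> 'a::topological_space set"
  assumes "compact A" "\<And>n. open (U n)" "incseq U" "A \<subseteq> (\<Union>n. U n)"
  obtains N where "A \<subseteq> U N"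
proof -
  obtain C where "finite C" "A \<subseteq> (\<Union>n\<in>C. U n)"
    using compactE_image[OF assms(1,2,4)] by metis
  moreover have "U n \<subseteq> U (Max C)" if "n \<in> C" for n
    using \<open>finite C\<close> that \<open>incseq U\<close> by (simp add: incseq_def)
  ultimately have "A \<subseteq> U (Max C)" by blast
  then show thesis by (rule that)
qed

theorem mainTheorem5:
  fixes A :: "'a::banach set" and f :: "nat \<Rightarrow> ('a \<Rightarrow>\<^sub>L real)" and m :: nat
  assumes "compact A" and "0 \<notin> A" and "1 \<le> m"
    and "\<forall>i\<in>{1..m}. f i \<in> dual_sphere \<and> weak_star_exposed (f i)"
    and "\<forall>y\<in>A. Max ((\<lambda>i. blinfun_apply (f i) y) ` {1..m}) > 0"
  shows "\<exists>c :: nat \<Rightarrow> 'a. \<exists>r :: nat \<Rightarrow> real.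
           ball_covering A ((\<lambda>i. (c i, r i)) ` {1..m})"
proof -
  have "\<forall>i\<in>{1..m}. \<exists>x. exposes x (f i)"
    using assms(4) weak_star_exposed_iff by blast
  then obtain x where x: "\<And>i. i \<in> {1..m} \<Longrightarrow> exposes (x i) (f i)"
    by metis
  define U where "U n = (\<Union>i\<in>{1..m}. ball (real n *\<^sub>R x i) (real n * norm (x i)))" for n
  have "incseq U"
    unfolding U_def incseq_def by (intro allI impI UN_mono order_refl ball_scaleR_mono) simp
  have "open (U n)" for n
    unfolding U_def by blast
  moreover have "A \<subseteq> (\<Union>n. U n)"
  proof
    fix y assume "y \<in> A"
    then obtain i where i: "i \<in> {1..m}" "blinfun_apply (f i) y > 0"
      using assms(3,5) Max_gr_iff[of "(\<lambda>i. blinfun_apply (f i) y) ` {1..m}" 0] by auto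
    obtain t where "0 \<le> t" "y \<in> ball (t *\<^sub>R x i) (t * norm (x i))"
      using exposes_imp_ray_ball[OF _ x[OF i(1)] i(2)] assms(4) i(1) weak_star_exposed_iff by blast
    moreover obtain n :: nat where "t \<le> n" using real_arch_simple by blast
    ultimately have "y \<in> U n" unfolding U_def using ball_scaleR_mono i(1) by blast
    then show "y \<in> (\<Union>n. U n)" by blast
  qed
  ultimately obtain N where "A \<subseteq> U N"
    using compact_subset_incseq_open[OF assms(1) _ \<open>incseq U\<close>] by blast
  \<comment> \<open>Passing to Suc N makes the radii positive.\<close>
  then have "A \<subseteq> U (Suc N)" using \<open>incseq U\<close> by (auto simp: incseq_Suc_iff)
  moreover have "x i \<noteq> 0" if "i \<in> {1..m}" for i
    using exposes_nonzero x[OF that] assms(4) that by blast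
  ultimately show ?thesis
    unfolding ball_covering_def U_def
    by (intro exI[of _ "\<lambda>i. real (Suc N) *\<^sub>R x i"] exI[of _ "\<lambda>i. real (Suc N) * norm (x i)"]) auto
qed

end
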